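(* Let $\mathfrak R$ be an iterated graph system satisfying (GR1)–(GR3), with replacement graphs $G_m$. Let $w=w_1\cdots w_m$ and $v=v_1\cdots v_m$ be distinct words in $W_m$ and $k:=|w\wedge v|$. Then $(w,v)\in E(G_m)$ if and only if $(w_k,v_k)\in E(G_1)$ and $(w_i,v_i)\in I_{\mathfrak t(w_k,v_k)}$ for all $k<i\le m$. Furthermore, if $\{w,v\}\in E(G_m)$, then $\mathfrak t(w,v)=\mathfrak t(w_k,v_k)$.
   Context: A graph is a pair $(V,E)$ with $V$ finite non-empty and $E\subseteq V\times V$ such that $(x,y)\in E$ implies $(y,x)\notin E$; write $\{x,y\}\in E$ if $(x,y)\in E$ or $(y,x)\in E$, and the type of an unordered edge is the type of whichever ordered pair lies in the edge set. An iterated graph system (IGS) consists of a connected graph $G_1=(S,E)$, a finite set $\mathcal T$ of types, a surjective typing function $\mathfrak t:E\to\mathcal T$, and for each $t\in\mathcal T$ a non-empty set $I_t\subseteq S\times S$. Let $W_m=S^m$, $[w]_k=w_1\cdots w_k$, and for distinct words $w,v$ of the same length $|w\wedge v|=\min\{k:[w]_k\ne[v]_k\}$. The replacement graphs $G_m=(W_m,E_m)$ with typings (denoted $\mathfrak t$ at every level) are defined recursively: $G_1$ given; $(w,v)\in E_{m+1}$ iff either (1) $[w]_m=[v]_m$ and $(w_{m+1},v_{m+1})\in E$, with type $\mathfrak t(w_{m+1},v_{m+1})$; or (2) $([w]_m,[v]_m)\in E_m$ and $(w_{m+1},v_{m+1})\in I_{\mathfrak t([w]_m,[v]_m)}$,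 with type $\mathfrak t([w]_m,[v]_m)$. Let $I_{t,+}=\{w:(w,v)\in I_t\text{ for some }v\}$, $I_{t,-}=\{v:(w,v)\in I_t\text{ for some }w\}$, $\mathfrak b_t^+(w)=|\{v:(w,v)\in I_t\}|$, $\mathfrak b_t^-(w)=|\{v:(v,w)\in I_t\}|$, $\deg_t^+(w)=|\{v:(w,v)\in E\text{ of type }t\}|$, $\deg_t^-(w)=|\{v:(v,w)\in E\text{ of type }t\}|$. (GR1): $\mathfrak b_t^\star(w)\in\{0,1\}$ for all $t,\star,w$; (GR2): $\mathfrak b_t^\star(w)$ and $\deg_t^\star(w)$ are never simultaneously non-zero; (GR3): $I_{t,-}\cap I_{t,+}=\emptyset$ for all $t$. *)

theory Defs
  imports Main
begin

definition is_graph :: "'a set \<Rightarrow> ('a \<times> 'a) set \<Rightarrow> bool" where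
  "is_graph S E \<longleftrightarrow> finite S \<and> S \<noteq> {} \<and> E \<subseteq> S \<times> S \<and>
     (\<forall>x y. (x, y) \<in> E \<longrightarrow> (y, x) \<notin> E)"

definition connected_graph :: "'a set \<Rightarrow> ('a \<times> 'a) set \<Rightarrow> bool" where
  "connected_graph S E \<longleftrightarrow> is_graph S E \<and>
     (\<forall>x\<in>S. \<forall>y\<in>S. (x, y) \<in> (E \<union> E\<inverse>)\<^sup>*)"

definition IGS :: "'a set \<Rightarrow> ('a \<times> 'a) set \<Rightarrow> 'b set \<Rightarrow> ('a \<times> 'a \<Rightarrow> 'b)
                   \<Rightarrow> ('b \<Rightarrow> ('a \<times> 'a) set) \<Rightarrow> bool" where
  "IGS S E T tp I \<longleftrightarrow> connected_graph S E \<and> finite T \<and> tp ` E = T \<and>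
     (\<forall>t\<in>T. I t \<noteq> {} \<and> I t \<subseteq> S \<times> S)"

definition words :: "'a set \<Rightarrow> nat \<Rightarrow> 'a list set" where
  "words S m = {w. length w = m \<and> set w \<subseteq> S}"

text \<open>Replacement graphs with typing, encoded as a set of typed ordered edges
  \<open>(w, v, type)\<close>; level m (m \<ge> 1) is \<open>G_m\<close>; level 0 is unused (empty).\<close>
fun RG :: "'a set \<Rightarrow> ('a \<times> 'a) set \<Rightarrow> ('a \<times> 'a \<Rightarrow> 'b) \<Rightarrow> ('b \<Rightarrow> ('a \<times> 'a) set)
           \<Rightarrow> nat \<Rightarrow> ('a list \<times> 'a list \<times> 'b) set" where
  "RG S E tp I 0 = {}"
| "RG S E tp I (Suc 0) = {([x], [y], tp (x, y)) | x y. (x, y) \<in> E}"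
| "RG S E tp I (Suc (Suc m)) =
     {(u @ [a], u @ [b], tp (a, b)) | u a b. u \<in> words S (Suc m) \<and> (a, b) \<in> E}
   \<union> {(u @ [a], u' @ [b], \<tau>) | u u' a b \<tau>. (u, u', \<tau>) \<in> RG S E tp I (Suc m) \<and> (a, b) \<in> I \<tau>}"

definition RG_edges :: "'a set \<Rightarrow> ('a \<times> 'a) set \<Rightarrow> ('a \<times> 'a \<Rightarrow> 'b) \<Rightarrow> ('b \<Rightarrow> ('a \<times> 'a) set)
           \<Rightarrow> nat \<Rightarrow> ('a list \<times> 'a list) set" where
  "RG_edges S E tp I m = {(w, v). \<exists>\<tau>. (w, v, \<tau>) \<in> RG S E tp I m}"

definition RG_type :: "'a set \<Rightarrow> ('a \<times> 'a) set \<Rightarrow> ('a \<times> 'a \<Rightarrow> 'b) \<Rightarrow> ('b \<Rightarrow> ('a \<times> 'a) set)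
           \<Rightarrow> nat \<Rightarrow> 'a list \<Rightarrow> 'a list \<Rightarrow> 'b" where
  "RG_type S E tp I m w v = (THE \<tau>. (w, v, \<tau>) \<in> RG S E tp I m)"

definition b_plus :: "('b \<Rightarrow> ('a \<times> 'a) set) \<Rightarrow> 'b \<Rightarrow> 'a \<Rightarrow> nat" where
  "b_plus I t w = card {v. (w, v) \<in> I t}"
definition b_minus :: "('b \<Rightarrow> ('a \<times> 'a) set) \<Rightarrow> 'b \<Rightarrow> 'a \<Rightarrow> nat" where
  "b_minus I t w = card {v. (v, w) \<in> I t}"
definition deg_plus :: "('a \<times> 'a) set \<Rightarrow> ('a \<times> 'a \<Rightarrow> 'b) \<Rightarrow> 'b \<Rightarrow> 'a \<Rightarrow> nat" where
  "deg_plus E tp t w = card {v. (w, v) \<in> E \<and> tp (w, v) = t}"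
definition deg_minus :: "('a \<times> 'a) set \<Rightarrow> ('a \<times> 'a \<Rightarrow> 'b) \<Rightarrow> 'b \<Rightarrow> 'a \<Rightarrow> nat" where
  "deg_minus E tp t w = card {v. (v, w) \<in> E \<and> tp (v, w) = t}"

definition GR1 :: "'a set \<Rightarrow> 'b set \<Rightarrow> ('b \<Rightarrow> ('a \<times> 'a) set) \<Rightarrow> bool" where
  "GR1 S T I \<longleftrightarrow> (\<forall>t\<in>T. \<forall>w\<in>S. b_plus I t w \<le> 1 \<and> b_minus I t w \<le> 1)"

definition GR2 :: "'a set \<Rightarrow> ('a \<times> 'a) set \<Rightarrow> 'b set \<Rightarrow> ('a \<times> 'a \<Rightarrow> 'b)
                   \<Rightarrow> ('b \<Rightarrow> ('a \<times> 'a) set) \<Rightarrow> bool" where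
  "GR2 S E T tp I \<longleftrightarrow> (\<forall>t\<in>T. \<forall>w\<in>S.
      \<not> (b_plus I t w \<noteq> 0 \<and> deg_plus E tp t w \<noteq> 0) \<and>
      \<not> (b_minus I t w \<noteq> 0 \<and> deg_minus E tp t w \<noteq> 0))"

definition GR3 :: "'b set \<Rightarrow> ('b \<Rightarrow> ('a \<times> 'a) set) \<Rightarrow> bool" where
  "GR3 T I \<longleftrightarrow> (\<forall>t\<in>T. Range (I t) \<inter> Domain (I t) = {})"

text \<open>\<open>|w \<and> v|\<close>: first (1-based) position where the words differ.\<close>
definition first_diff :: "'a list \<Rightarrow> 'a list \<Rightarrow> nat" where
  "first_diff w v = (LEAST k. take k w \<noteq> take k v)"

end

theory Submission
  imports Defs
begin

text \<open>An edge of \<open>G_m\<close> is born at some level from an edge \<open>(a, b)\<close> of \<open>G_1\<close> between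
  two words with a common prefix \<open>p\<close>, and every later level appends to both ends a pair from
  \<open>I\<^sub>\<tau>\<close>, \<open>\<tau> = t(a, b)\<close>. So the edges of \<open>G_m\<close> are exactly the pairs
  \<open>(p a xs, p b ys)\<close> with \<open>(a, b) \<in> E\<close> and \<open>xs, ys\<close> pointwise related by \<open>I\<^sub>\<tau>\<close>. Since \<open>E\<close>
  is irreflexive, \<open>a \<noteq> b\<close>; hence the position of \<open>a\<close> is the first difference \<open>k\<close>,
  the decomposition is unique, and the type of the edge is \<open>t(a, b)\<close>.\<close>

lemma first_diff_append_Cons:
  assumes "a \<noteq> b"
  shows "first_diff (p @ a # xs) (p @ b # ys) = Suc (length p)"
  unfolding first_diff_def
proof (rule Least_equality)
  show "take (Suc (length p)) (p @ a # xs) \<noteq> take (Suc (length p)) (p @ b # ys)"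
    using assms by simp
next
  fix n assume "take n (p @ a # xs) \<noteq> take n (p @ b # ys)"
  then show "Suc (length p) \<le> n"
    by (cases "n \<le> length p") auto
qed

lemma append_Cons_split_unique:
  assumes "a \<noteq> b" "a' \<noteq> b'"
    and "p @ a # xs = q @ a' # xs'" "p @ b # ys = q @ b' # ys'"
  shows "p = q \<and> a = a' \<and> b = b' \<and> xs = xs' \<and> ys = ys'"
proof -
  have "length p = length q"
    using first_diff_append_Cons[OF assms(1), of p xs ys]
      first_diff_append_Cons[OF assms(2), of q xs' ys'] assms(3,4) by simp
  then show ?thesis
    using assms(3,4) by simp
qed

lemma same_length_distinct_split:
  assumes "length w = length v" "w \<noteq> v"
  obtains p a b xs ys where "w = p @ a # xs" "v = p @ b # ys" "a \<noteq> b" "length xs = length ys"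
proof -
  obtain p xs' ys' where split: "w = p @ xs'" "v = p @ ys'"
      and diff: "xs' = [] \<or> ys' = [] \<or> hd xs' \<noteq> hd ys'"
    using longest_common_prefix by blast
  have "length xs' = length ys'" "xs' \<noteq> ys'"
    using assms split by auto
  then obtain a b xs ys where "xs' = a # xs" "ys' = b # ys"
    by (cases xs'; cases ys') auto
  then show thesis
    using that split diff \<open>length xs' = length ys'\<close> by simp
qed

lemma list_all2_iff_nth_after_split:
  assumes "length xs = length ys"
  shows "list_all2 P xs ys \<longleftrightarrow>
    (\<forall>i. Suc (length p) < i \<and> i \<le> Suc (length p + length xs) \<longrightarrow>
      P ((p @ a # xs) ! (i - 1)) ((p @ b # ys) ! (i - 1)))"
proof -
  let ?k = "Suc (length p)"
  have shift: "(p @ a # xs) ! (?k + j) = xs ! j" "(p @ b # ys) ! (?k + j) = ys ! j" for j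
    by (simp_all add: nth_append)
  have "(\<forall>j < length xs. P (xs ! j) (ys ! j)) \<longleftrightarrow>
    (\<forall>i. ?k < i \<and> i \<le> Suc (length p + length xs) \<longrightarrow>
      P ((p @ a # xs) ! (i - 1)) ((p @ b # ys) ! (i - 1)))"
  proof (intro iffI allI impI)
    fix i assume tail: "\<forall>j < length xs. P (xs ! j) (ys ! j)"
      and "?k < i \<and> i \<le> Suc (length p + length xs)"
    then have "i - 1 = ?k + (i - 1 - ?k)" "i - 1 - ?k < length xs"
      by auto
    then show "P ((p @ a # xs) ! (i - 1)) ((p @ b # ys) ! (i - 1))"
      using tail shift by metis
  next
    fix j assume "\<forall>i. ?k < i \<and> i \<le> Suc (length p + length xs) \<longrightarrow>
      P ((p @ a # xs) ! (i - 1)) ((p @ b # ys) ! (i - 1))" and "j < length xs"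
    then show "P (xs ! j) (ys ! j)"
      using shift[of j] by (auto dest: spec[of _ "?k + j + 1"])
  qed
  then show ?thesis
    using assms by (simp add: list_all2_conv_all_nth)
qed

lemma RG_intra_edge:
  assumes "set u \<subseteq> S" "(a, b) \<in> E"
  shows "(u @ [a], u @ [b], tp (a, b)) \<in> RG S E tp I (Suc (length u))"
proof (cases "length u")
  case 0
  then show ?thesis using assms by simp
next
  case (Suc n)
  then show ?thesis using assms by (auto simp: words_def)
qed

lemma RG_inter_edge:
  assumes "(u, u', \<tau>) \<in> RG S E tp I n" "(a, b) \<in> I \<tau>"
  shows "(u @ [a], u' @ [b], \<tau>) \<in> RG S E tp I (Suc n)"
proof (cases n)
  case 0
  then show ?thesis using assms by simp
next
  case (Suc n')
  then show ?thesis using assms by auto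
qed

lemma RG_SucE:
  assumes "(w, v, \<tau>) \<in> RG S E tp I (Suc n)"
  obtains u a b where "w = u @ [a]" "v = u @ [b]" "set u \<subseteq> S" "length u = n"
      "(a, b) \<in> E" "\<tau> = tp (a, b)"
  | u u' a b where "w = u @ [a]" "v = u' @ [b]" "(u, u', \<tau>) \<in> RG S E tp I n" "(a, b) \<in> I \<tau>"
  using assms by (cases n) (auto simp: words_def)

lemma RG_imp_split:
  assumes "(w, v, \<tau>) \<in> RG S E tp I n"
  shows "\<exists>p a b xs ys. w = p @ a # xs \<and> v = p @ b # ys \<and> set p \<subseteq> S \<and> (a, b) \<in> E
    \<and> \<tau> = tp (a, b) \<and> list_all2 (\<lambda>x y. (x, y) \<in> I \<tau>) xs ys"
  using assms
proof (induction n arbitrary: w v)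
  case 0 then show ?case by simp
next
  case (Suc n)
  from Suc.prems show ?case
  proof (cases rule: RG_SucE)
    case (1 u a b)
    then show ?thesis by (intro exI[of _ u] exI[of _ "[]"]) auto
  next
    case (2 u u' a b)
    then obtain p a' b' xs ys where "u = p @ a' # xs" "u' = p @ b' # ys" "set p \<subseteq> S"
        "(a', b') \<in> E" "\<tau> = tp (a', b')" "list_all2 (\<lambda>x y. (x, y) \<in> I \<tau>) xs ys"
      using Suc.IH by blast
    with 2 show ?thesis
      by (intro exI[of _ p] exI[of _ "xs @ [a]"] exI[of _ "ys @ [b]"]) (auto intro: list_all2_appendI)
  qed
qed

lemma split_imp_RG:
  assumes "set p \<subseteq> S" "(a, b) \<in> E" "list_all2 (\<lambda>x y. (x, y) \<in> I (tp (a, b))) xs ys"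
  shows "(p @ a # xs, p @ b # ys, tp (a, b)) \<in> RG S E tp I (Suc (length p + length xs))"
  using assms(3)
proof (induction xs arbitrary: ys rule: rev_induct)
  case Nil
  then show ?case using RG_intra_edge[OF assms(1,2)] by simp
next
  case (snoc x xs)
  then obtain y ys' where "ys = ys' @ [y]" "list_all2 (\<lambda>x y. (x, y) \<in> I (tp (a, b))) xs ys'"
      "(x, y) \<in> I (tp (a, b))"
    by (auto simp: list_all2_append1 list_all2_Cons1)
  with snoc.IH show ?case
    using RG_inter_edge[where u = "p @ a # xs" and u' = "p @ b # ys'"] by fastforce
qed

lemma RG_split_iff:
  assumes "irrefl E" "a \<noteq> b"
  shows "(p @ a # xs, p @ b # ys, \<tau>) \<in> RG S E tp I (Suc (length p + length xs)) \<longleftrightarrow>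
    set p \<subseteq> S \<and> (a, b) \<in> E \<and> \<tau> = tp (a, b) \<and> list_all2 (\<lambda>x y. (x, y) \<in> I \<tau>) xs ys"
proof
  assume "(p @ a # xs, p @ b # ys, \<tau>) \<in> RG S E tp I (Suc (length p + length xs))"
  from RG_imp_split[OF this] obtain q a' b' xs' ys'
    where split: "p @ a # xs = q @ a' # xs'" "p @ b # ys = q @ b' # ys'"
    and rest: "set q \<subseteq> S" "(a', b') \<in> E" "\<tau> = tp (a', b')" "list_all2 (\<lambda>x y. (x, y) \<in> I \<tau>) xs' ys'"
    by blast
  have "a' \<noteq> b'"
    using rest(2) irreflD[OF assms(1)] by blast
  then have "p = q \<and> a = a' \<and> b = b' \<and> xs = xs' \<and> ys = ys'"
    using append_Cons_split_unique[OF assms(2) _ split] by blast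
  with rest show "set p \<subseteq> S \<and> (a, b) \<in> E \<and> \<tau> = tp (a, b) \<and> list_all2 (\<lambda>x y. (x, y) \<in> I \<tau>) xs ys"
    by simp
next
  assume "set p \<subseteq> S \<and> (a, b) \<in> E \<and> \<tau> = tp (a, b) \<and> list_all2 (\<lambda>x y. (x, y) \<in> I \<tau>) xs ys"
  then show "(p @ a # xs, p @ b # ys, \<tau>) \<in> RG S E tp I (Suc (length p + length xs))"
    by (auto intro: split_imp_RG)
qed

theorem lemma3p7:
  fixes S :: "'a set" and E :: "('a \<times> 'a) set" and T :: "'b set"
    and tp :: "'a \<times> 'a \<Rightarrow> 'b" and I :: "'b \<Rightarrow> ('a \<times> 'a) set"
    and m :: nat and w v :: "'a list"
  assumes "IGS S E T tp I" and "GR1 S T I" and "GR2 S E T tp I" and "GR3 T I"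
    and "w \<in> words S m" and "v \<in> words S m" and "w \<noteq> v"
    and "k = first_diff w v"
  shows "((w, v) \<in> RG_edges S E tp I m \<longleftrightarrow>
            (w ! (k - 1), v ! (k - 1)) \<in> E \<and>
            (\<forall>i. k < i \<and> i \<le> m \<longrightarrow> (w ! (i - 1), v ! (i - 1)) \<in> I (tp (w ! (k - 1), v ! (k - 1)))))
       \<and> ((w, v) \<in> RG_edges S E tp I m \<longrightarrow> RG_type S E tp I m w v = tp (w ! (k - 1), v ! (k - 1)))"
proof -
  have "irrefl E"
    using assms(1) by (auto simp: IGS_def connected_graph_def is_graph_def irrefl_def)
  have lengths: "length w = m" "length v = m" and "set w \<subseteq> S"
    using assms(5,6) by (auto simp: words_def)
  obtain p a b xs ys where w: "w = p @ a # xs" and v: "v = p @ b # ys"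
    and "a \<noteq> b" and "length xs = length ys"
    using same_length_distinct_split lengths assms(7) by metis
  have k: "k = Suc (length p)"
    using assms(8) first_diff_append_Cons[OF \<open>a \<noteq> b\<close>] w v by simp
  have m: "m = Suc (length p + length xs)"
    using lengths w by simp
  have letters: "w ! (k - 1) = a" "v ! (k - 1) = b"
    using w v k by simp_all
  have tails: "list_all2 P xs ys \<longleftrightarrow> (\<forall>i. k < i \<and> i \<le> m \<longrightarrow> P (w ! (i - 1)) (v ! (i - 1)))" for P
    using list_all2_iff_nth_after_split[OF \<open>length xs = length ys\<close>] w v k m by simp
  have "set p \<subseteq> S"
    using \<open>set w \<subseteq> S\<close> w by simp
  then have edge_iff: "(w, v, \<tau>) \<in> RG S E tp I m \<longleftrightarrow>
      (a, b) \<in> E \<and> \<tau> = tp (a, b) \<and> list_all2 (\<lambda>x y. (x, y) \<in> I \<tau>) xs ys" for \<tau>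
    unfolding w v m RG_split_iff[OF \<open>irrefl E\<close> \<open>a \<noteq> b\<close>] by simp
  show ?thesis
    unfolding RG_edges_def RG_type_def letters
    using edge_iff tails by (auto intro: the_equality)
qed

end
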